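(* Let $G$ be an abelian group and $B=\bigoplus_{g\in G}B_g$ a $G$-graded integral domain of characteristic zero. Let $D\in \mathrm{HLND}(B)\setminus\{0\}$, let $A=\ker D$, and suppose that $G(A)=G(B)$. Then: (a) $\mathrm{HFrac}(B)=(\mathrm{HFrac}(A))^{(1)}$, i.e. $\mathrm{HFrac}(B)$ is a purely transcendental extension of $\mathrm{HFrac}(A)$ of transcendence degree $1$. (b) If $\mathbf{k}$ is a field included in $B$, then $\mathbf{k}\cap B_0$ is a field included in $\mathrm{HFrac}(A)$. (c) If $G$ is torsion-free and $\mathbf{k}$ is a field included in $B$, then $\mathbf{k}\subseteq \mathrm{HFrac}(A)$ and consequently $\mathrm{HFrac}(B)$ is ruled over $\mathbf{k}$.
   Context: A $G$-grading of a ring $B$ is a family of additive subgroups $\{B_g\}_{g\in G}$ with $B=\bigoplus_g B_g$ and $B_gB_h\subseteq B_{g+h}$. A derivation $D:B\to B$ is locally nilpotent if for each $b\in B$ some power $D^n(b)=0$; it is homogeneous if there is $h\in G$ with $D(B_g)\subseteq B_{g+h}$ for all $g$. $\mathrm{HLND}(B)$ denotes the set of homogeneous locally nilpotent derivations of $B$. For $D\in\mathrm{HLND}(B)$, $A=\ker D$ is a graded subring, i.e. $A=\bigoplus_g (A\cap B_g)$; write $A_g=A\cap B_g$. For a graded subring $A$ of $B$, $G(A)$ is the subgroup of $G$ generated by $\{g\in G: A_g\neq 0\}$. For a $G$-graded domain $B$, $\mathrm{HFrac}(B)$ (the homogeneous field of fractions) is the subfield of $\mathrm{Frac}(B)$ consisting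 of all fractions $b/s$ with $b\in B_i$, $s\in B_i\setminus\{0\}$ for some $i\in G$; for the graded subring $A$, $\mathrm{HFrac}(A)\subseteq\mathrm{HFrac}(B)$ is defined analogously. A field extension $L/\mathbf{k}$ is ruled if there is a field $K$ with $\mathbf{k}\subseteq K\subseteq L$ and $L=K^{(1)}$ (purely transcendental of transcendence degree $1$ over $K$). *)

theory Defs
  imports "HOL-Computational_Algebra.Fraction_Field" "HOL-Computational_Algebra.Polynomial"
begin

definition is_grading :: "('g::ab_group_add \<Rightarrow> 'b::comm_ring_1 set) \<Rightarrow> bool" where
  "is_grading Bg \<longleftrightarrow>
     (\<forall>g. 0 \<in> Bg g \<and> (\<forall>x\<in>Bg g. \<forall>y\<in>Bg g. x + y \<in> Bg g \<and> - x \<in> Bg g)) \<and>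
     (\<forall>b. \<exists>!c :: 'g \<Rightarrow> 'b. finite {g. c g \<noteq> 0} \<and> (\<forall>g. c g \<in> Bg g) \<and>
            b = (\<Sum>g\<in>{g. c g \<noteq> 0}. c g)) \<and>
     (\<forall>g h. \<forall>x\<in>Bg g. \<forall>y\<in>Bg h. x * y \<in> Bg (g + h))"

definition is_derivation :: "('b::comm_ring_1 \<Rightarrow> 'b) \<Rightarrow> bool" where
  "is_derivation D \<longleftrightarrow> (\<forall>x y. D (x + y) = D x + D y \<and> D (x * y) = x * D y + y * D x)"

definition locally_nilpotent :: "('b::comm_ring_1 \<Rightarrow> 'b) \<Rightarrow> bool" where
  "locally_nilpotent D \<longleftrightarrow> (\<forall>b. \<exists>n. (D ^^ n) b = 0)"

definition homogeneous_map :: "('g::ab_group_add \<Rightarrow> 'b set) \<Rightarrow> ('b \<Rightarrow> 'b) \<Rightarrow> bool" where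
  "homogeneous_map Bg D \<longleftrightarrow> (\<exists>h. \<forall>g. \<forall>x\<in>Bg g. D x \<in> Bg (g + h))"

definition HLND :: "('g::ab_group_add \<Rightarrow> 'b::comm_ring_1 set) \<Rightarrow> ('b \<Rightarrow> 'b) set" where
  "HLND Bg = {D. is_derivation D \<and> locally_nilpotent D \<and> homogeneous_map Bg D}"

definition gen_subgroup :: "'g::ab_group_add set \<Rightarrow> 'g set" where
  "gen_subgroup S = \<Inter>{H. 0 \<in> H \<and> (\<forall>x\<in>H. \<forall>y\<in>H. x - y \<in> H) \<and> S \<subseteq> H}"

text \<open>G(A) for a graded subring A of B (A_g = A \<inter> B_g).\<close>
definition Gsupp :: "('g::ab_group_add \<Rightarrow> 'b::zero set) \<Rightarrow> 'b set \<Rightarrow> 'g set" where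
  "Gsupp Bg A = gen_subgroup {g. \<exists>x \<in> A \<inter> Bg g. x \<noteq> 0}"

text \<open>Homogeneous field of fractions of the graded subring A (A = UNIV gives HFrac(B)).\<close>
definition HFrac :: "('g::ab_group_add \<Rightarrow> 'b::idom set) \<Rightarrow> 'b set \<Rightarrow> 'b fract set" where
  "HFrac Bg A = {Fraction_Field.Fract b s | b s i. b \<in> A \<inter> Bg i \<and> s \<in> A \<inter> Bg i \<and> s \<noteq> 0}"

definition is_subfield :: "'a::comm_ring_1 set \<Rightarrow> bool" where
  "is_subfield K \<longleftrightarrow> 0 \<in> K \<and> 1 \<in> K \<and>
     (\<forall>x\<in>K. \<forall>y\<in>K. x + y \<in> K \<and> x * y \<in> K \<and> - x \<in> K) \<and>
     (\<forall>x\<in>K. x \<noteq> 0 \<longrightarrow> (\<exists>y\<in>K. x * y = 1))"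

definition poly_over :: "'a::zero set \<Rightarrow> 'a poly \<Rightarrow> bool" where
  "poly_over K p \<longleftrightarrow> (\<forall>i. coeff p i \<in> K)"

definition purely_transcendental_deg1 :: "'a::field set \<Rightarrow> 'a set \<Rightarrow> bool" where
  "purely_transcendental_deg1 K L \<longleftrightarrow> K \<subseteq> L \<and>
     (\<exists>t\<in>L. (\<forall>p. poly_over K p \<and> poly p t = 0 \<longrightarrow> p = 0) \<and>
        L = {poly p t / poly q t | p q. poly_over K p \<and> poly_over K q \<and> poly q t \<noteq> 0})"

definition ruled :: "'a::field set \<Rightarrow> 'a set \<Rightarrow> bool" where
  "ruled k L \<longleftrightarrow> (\<exists>K. is_subfield K \<and> k \<subseteq> K \<and> K \<subseteq> L \<and> purely_transcendental_deg1 K L)"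

definition torsion_free_group :: "'g::ab_group_add itself \<Rightarrow> bool" where
  "torsion_free_group _ \<longleftrightarrow> (\<forall>(g::'g) (n::nat). n > 0 \<and> (((+) g) ^^ n) 0 = 0 \<longrightarrow> g = 0)"

end

theory Submission
  imports Defs "HOL-Computational_Algebra.Polynomial_Factorial"
begin

text \<open>
  As soon as \<open>D \<noteq> 0\<close> there is a homogeneous local slice \<open>r\<close> (\<open>D r \<noteq> 0 = D\<^sup>2 r\<close>), of
  degree \<open>\<rho>\<close> say. Since \<open>G(A) = G(B)\<close>, \<open>\<rho> = \<gamma> - \<delta>\<close> with nonzero \<open>c \<in> A\<^sub>\<gamma>\<close>, \<open>d \<in> A\<^sub>\<delta>\<close>, so
  \<open>t = r d / c\<close> lies in \<open>HFrac(B)\<close>. Every homogeneous \<open>b\<close> satisfies \<open>e b = P(r)\<close> with \<open>e \<in> A\<close>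
  homogeneous and nonzero and \<open>P \<in> A[X]\<close>; substituting \<open>r = t c / d\<close> exhibits \<open>HFrac(B)\<close> as
  \<open>HFrac(A)(t)\<close>, and \<open>t\<close> is transcendental over \<open>HFrac(A)\<close> because \<open>r\<close> is transcendental
  over \<open>A\<close>. For (b), units of \<open>B\<close> lie in \<open>A\<close> because the \<open>D\<close>-degree
  \<open>max {m. D\<^sup>m x \<noteq> 0}\<close> is additive. For (c), a torsion-free abelian group can be totally
  ordered, and then a product is homogeneous only if its factors are; so the elements of a
  field \<open>k \<subseteq> B\<close> are homogeneous, of degree \<open>0\<close> because \<open>1 + x\<close> is homogeneous as well.
\<close>

section \<open>Orderings of torsion-free abelian groups\<close>

definition nsmul :: "nat \<Rightarrow> 'g::ab_group_add \<Rightarrow> 'g" where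
  "nsmul n g = (((+) g) ^^ n) 0"

lemma nsmul_0 [simp]: "nsmul 0 g = 0"
  by (simp add: nsmul_def)

lemma nsmul_Suc [simp]: "nsmul (Suc n) g = g + nsmul n g"
  by (simp add: nsmul_def)

lemma nsmul_add: "nsmul (m + n) g = nsmul m g + nsmul n g"
  by (induction m) (simp_all add: algebra_simps)

lemma nsmul_add_right: "nsmul n (g + h) = nsmul n g + nsmul n h"
  by (induction n) (simp_all add: algebra_simps)

lemma nsmul_uminus: "nsmul n (- g) = - nsmul n g"
  by (induction n) (simp_all add: algebra_simps)

lemma nsmul_diff_right: "nsmul n (g - h) = nsmul n g - nsmul n h"
  using nsmul_add_right[of n g "- h"] by (simp add: nsmul_uminus)

lemma nsmul_mult: "nsmul (m * n) g = nsmul m (nsmul n g)"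
  by (induction m) (simp_all add: nsmul_add)

lemma subset_gen_subgroup: "S \<subseteq> gen_subgroup S"
  unfolding gen_subgroup_def by blast

lemma gen_subgroup_submonoid:
  fixes M :: "'g::ab_group_add set"
  assumes zero: "0 \<in> M" and add: "\<And>u v. u \<in> M \<Longrightarrow> v \<in> M \<Longrightarrow> u + v \<in> M"
  shows "gen_subgroup M = {u - v | u v. u \<in> M \<and> v \<in> M}"
proof -
  define H where "H = {u - v | u v. u \<in> M \<and> v \<in> M}"
  have "x - y \<in> H" if "x \<in> H" "y \<in> H" for x y
  proof -
    obtain u v u' v' where "x = u - v" "y = u' - v'" "u \<in> M" "v \<in> M" "u' \<in> M" "v' \<in> M"
      using \<open>x \<in> H\<close> \<open>y \<in> H\<close> unfolding H_def by blast
    then have "x - y = (u + v') - (v + u')" "u + v' \<in> M" "v + u' \<in> M"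
      by (simp_all add: add)
    then show ?thesis
      unfolding H_def by blast
  qed
  moreover have "u \<in> H" if "u \<in> M" for u
    unfolding H_def using zero that by (intro CollectI exI[of _ u] exI[of _ 0]) simp
  moreover have "0 \<in> H"
    using zero by (rule calculation(2))
  ultimately have "gen_subgroup M \<subseteq> H"
    unfolding gen_subgroup_def by (intro Inter_lower) blast
  moreover have "u - v \<in> gen_subgroup M" if "u \<in> M" "v \<in> M" for u v
    using that unfolding gen_subgroup_def by blast
  ultimately show ?thesis
    unfolding H_def by blast
qed

definition cone :: "'g::ab_group_add set \<Rightarrow> bool" where
  "cone P \<longleftrightarrow> 0 \<notin> P \<and> (\<forall>x\<in>P. \<forall>y\<in>P. x + y \<in> P)"

text \<open>A total cone is the set of positive elements of a total order compatible with addition.\<close>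

definition total_cone :: "'g::ab_group_add set \<Rightarrow> bool" where
  "total_cone P \<longleftrightarrow> cone P \<and> (\<forall>x. x \<noteq> 0 \<longrightarrow> x \<in> P \<or> - x \<in> P)"

lemma cone_add: "cone P \<Longrightarrow> x \<in> P \<Longrightarrow> y \<in> P \<Longrightarrow> x + y \<in> P"
  by (simp add: cone_def)

lemma cone_zero: "cone P \<Longrightarrow> 0 \<notin> P"
  by (simp add: cone_def)

lemma cone_nsmul: "cone P \<Longrightarrow> p \<in> P \<Longrightarrow> n > 0 \<Longrightarrow> nsmul n p \<in> P"
proof (induction n)
  case (Suc n)
  show ?case
  proof (cases "n = 0")
    case False
    then show ?thesis
      using Suc cone_add[of P p "nsmul n p"] by simp
  qed (use Suc in simp)
qed simp

lemma cone_sum_eq_zero: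
  assumes "cone P" "u = 0 \<or> u \<in> P" "v = 0 \<or> v \<in> P" "u + v = 0"
  shows "u = 0 \<and> v = 0"
  using assms unfolding cone_def by (metis add.left_neutral add.right_neutral)

lemma uminus_image_iff: "x \<in> uminus ` P \<longleftrightarrow> - x \<in> (P :: 'g::ab_group_add set)"
  by force

lemma cone_uminus: "cone P \<Longrightarrow> cone (uminus ` P)"
  by (auto simp: cone_def uminus_image_iff)

lemma total_cone_uminus: "total_cone P \<Longrightarrow> total_cone (uminus ` P)"
  by (auto simp: total_cone_def cone_uminus uminus_image_iff)

lemma torsion_free_nsmul_eq_0:
  "torsion_free_group TYPE('g::ab_group_add) \<Longrightarrow> n > 0 \<Longrightarrow> nsmul n (g::'g) = 0 \<Longrightarrow> g = 0"
  unfolding torsion_free_group_def nsmul_def by blast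

definition cone_extension :: "'g::ab_group_add set \<Rightarrow> 'g \<Rightarrow> 'g set" where
  "cone_extension M x = {p + nsmul n x | p n. p \<in> insert 0 M \<and> (p \<in> M \<or> n > 0)}"

lemma mem_cone_extension:
  "y \<in> cone_extension M x \<longleftrightarrow> (\<exists>p n. y = p + nsmul n x \<and> p \<in> insert 0 M \<and> (p \<in> M \<or> n > 0))"
  unfolding cone_extension_def by blast

lemma cone_cone_extension:
  fixes M :: "'g::ab_group_add set"
  assumes M: "cone M" and tf: "torsion_free_group TYPE('g)" and x: "x \<noteq> 0"
    and no_torsion_mod_M: "\<And>p n. p \<in> M \<Longrightarrow> n > 0 \<Longrightarrow> p + nsmul n x \<noteq> 0"
  shows "cone (cone_extension M x)"
  unfolding cone_def
proof (intro conjI ballI)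
  show "0 \<notin> cone_extension M x"
  proof
    assume "0 \<in> cone_extension M x"
    then obtain p n where p: "0 = p + nsmul n x" "p \<in> insert 0 M" "p \<in> M \<or> n > 0"
      unfolding mem_cone_extension by blast
    show False
    proof (cases "p = 0")
      case True
      then have "n > 0" "nsmul n x = 0"
        using p cone_zero[OF M] by auto
      then show False
        using torsion_free_nsmul_eq_0[OF tf] x by blast
    next
      case False
      then have "p \<in> M" "n > 0"
        using p cone_zero[OF M] by (auto intro: gr0I)
      then show False
        using p(1) no_torsion_mod_M by metis
    qed
  qed
  fix u v
  assume "u \<in> cone_extension M x" "v \<in> cone_extension M x"
  then obtain p n q m where uv: "u = p + nsmul n x" "v = q + nsmul m x"
    and pq: "p \<in> insert 0 M" "p \<in> M \<or> n > 0" "q \<in> insert 0 M" "q \<in> M \<or> m > 0"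
    unfolding mem_cone_extension by blast
  have "u + v = (p + q) + nsmul (n + m) x"
    using uv by (simp add: nsmul_add algebra_simps)
  moreover have "p + q \<in> insert 0 M" "p + q \<in> M \<or> n + m > 0"
    using pq cone_add[OF M] by auto
  ultimately show "u + v \<in> cone_extension M x"
    unfolding mem_cone_extension by blast
qed

lemma cone_Union_chain:
  assumes "C \<in> chains {P::'g::ab_group_add set. cone P}"
  shows "cone (\<Union>C)"
proof -
  have cones: "\<And>X. X \<in> C \<Longrightarrow> cone X"
    and chain: "\<And>X Y. X \<in> C \<Longrightarrow> Y \<in> C \<Longrightarrow> X \<subseteq> Y \<or> Y \<subseteq> X"
    using assms unfolding chains_def chain_subset_def by auto
  have "0 \<notin> \<Union>C"
    using cones cone_zero by blast
  moreover have "x + y \<in> \<Union>C" if xy: "x \<in> \<Union>C" "y \<in> \<Union>C" for x y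
  proof -
    obtain X Y where "X \<in> C" "Y \<in> C" "x \<in> X" "y \<in> Y"
      using xy by blast
    then show ?thesis
      using chain[of X Y] cones cone_add by blast
  qed
  ultimately show ?thesis
    unfolding cone_def by blast
qed

text \<open>Levi's argument: if neither \<open>x\<close> nor \<open>-x\<close> lies in the maximal cone \<open>M\<close>, maximality
  forces relations \<open>p + n x = 0\<close> and \<open>q - m x = 0\<close> with \<open>p, q \<in> M\<close> and \<open>m, n > 0\<close>,
  and then \<open>m p + n q = 0\<close> lies in \<open>M\<close>.\<close>

lemma maximal_cone_total:
  fixes M :: "'g::ab_group_add set"
  assumes M: "cone M" and tf: "torsion_free_group TYPE('g)"
    and max: "\<And>X. cone X \<Longrightarrow> M \<subseteq> X \<Longrightarrow> X = M"
  shows "total_cone M"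
proof -
  have torsion_mod_M: "\<exists>p\<in>M. \<exists>n>0. p + nsmul n x = 0" if "x \<noteq> 0" "x \<notin> M" for x
  proof (rule ccontr)
    assume "\<not> ?thesis"
    then have "cone (cone_extension M x)"
      using cone_cone_extension[OF M tf \<open>x \<noteq> 0\<close>] by blast
    moreover have "p \<in> cone_extension M x" if "p \<in> M" for p
      unfolding mem_cone_extension using that by (intro exI[of _ p] exI[of _ 0]) simp
    moreover have "x \<in> cone_extension M x"
      unfolding mem_cone_extension by (intro exI[of _ 0] exI[of _ 1]) simp
    ultimately show False
      using max[of "cone_extension M x"] \<open>x \<notin> M\<close> by blast
  qed
  have "x \<in> M \<or> - x \<in> M" if x: "x \<noteq> 0" for x
  proof (rule ccontr)
    assume "\<not> ?thesis"
    then obtain p n q m where p: "p \<in> M" "n > 0" "p + nsmul n x = 0"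
      and q: "q \<in> M" "m > 0" "q + nsmul m (- x) = 0"
      using torsion_mod_M[of x] torsion_mod_M[of "- x"] x by auto
    have "nsmul m p \<in> M" "nsmul n q \<in> M"
      using cone_nsmul[OF M] p q by auto
    moreover have "nsmul m p + nsmul n q = 0"
    proof -
      have "p = - nsmul n x" "q = nsmul m x"
        using p(3) q(3) by (simp_all add: eq_neg_iff_add_eq_0 nsmul_uminus)
      then show ?thesis
        by (simp add: nsmul_uminus nsmul_mult [symmetric] mult.commute)
    qed
    ultimately show False
      using cone_add[OF M] cone_zero[OF M] by metis
  qed
  then show ?thesis
    using M unfolding total_cone_def by blast
qed

theorem torsion_free_total_cone:
  assumes "torsion_free_group TYPE('g::ab_group_add)"
  shows "\<exists>P::'g set. total_cone P"
proof -
  obtain M :: "'g set" where "cone M" "\<And>X. cone X \<Longrightarrow> M \<subseteq> X \<Longrightarrow> X = M"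
    using Zorn_Lemma[of "{P. cone P}"] cone_Union_chain by blast
  then show ?thesis
    using maximal_cone_total[OF _ assms] by blast
qed

definition cone_greatest :: "'g::ab_group_add set \<Rightarrow> 'g set \<Rightarrow> 'g \<Rightarrow> bool" where
  "cone_greatest P S m \<longleftrightarrow> m \<in> S \<and> (\<forall>s\<in>S. s \<noteq> m \<longrightarrow> m - s \<in> P)"

lemma total_cone_greatest_exists:
  assumes P: "total_cone P" and "finite S" "S \<noteq> {}"
  shows "\<exists>m. cone_greatest P S m"
  using \<open>finite S\<close> \<open>S \<noteq> {}\<close>
proof (induction S rule: finite_ne_induct)
  case (singleton x)
  have "cone_greatest P {x} x"
    by (simp add: cone_greatest_def)
  then show ?case ..
next
  case (insert x F)
  then obtain m where m: "m \<in> F" "\<forall>s\<in>F. s \<noteq> m \<longrightarrow> m - s \<in> P"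
    unfolding cone_greatest_def by blast
  have P_add: "u \<in> P \<Longrightarrow> v \<in> P \<Longrightarrow> u + v \<in> P" for u v
    using P by (simp add: total_cone_def cone_add)
  show ?case
  proof (cases "x - m \<in> P")
    case True
    have "x - s \<in> P" if "s \<in> F" "s \<noteq> x" for s
    proof (cases "s = m")
      case False
      then have "m - s \<in> P"
        using m(2) that(1) by blast
      then have "(x - m) + (m - s) \<in> P"
        using P_add[OF True] by blast
      then show ?thesis by simp
    qed (use True in simp)
    then have "cone_greatest P (insert x F) x"
      unfolding cone_greatest_def by blast
    then show ?thesis ..
  next
    case False
    have "x = m \<or> m - x \<in> P"
    proof (cases "x = m")
      case False
      then have "x - m \<in> P \<or> - (x - m) \<in> P"
        using P unfolding total_cone_def by (metis right_minus_eq)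
      then show ?thesis
        using \<open>x - m \<notin> P\<close> by simp
    qed simp
    then have "cone_greatest P (insert x F) m"
      using m unfolding cone_greatest_def by auto
    then show ?thesis ..
  qed
qed

section \<open>Graded domains\<close>

locale graded =
  fixes Bg :: "'g::ab_group_add \<Rightarrow> 'b::idom set"
  assumes grading: "is_grading Bg"
begin

lemma Bg_zero [simp]: "0 \<in> Bg g"
  using grading by (simp add: is_grading_def)

lemma Bg_add: "x \<in> Bg g \<Longrightarrow> y \<in> Bg g \<Longrightarrow> x + y \<in> Bg g"
  using grading by (simp add: is_grading_def)

lemma Bg_uminus: "x \<in> Bg g \<Longrightarrow> - x \<in> Bg g"
  using grading by (simp add: is_grading_def)

lemma Bg_diff: "x \<in> Bg g \<Longrightarrow> y \<in> Bg g \<Longrightarrow> x - y \<in> Bg g"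
  using Bg_add[of x g "- y"] Bg_uminus[of y g] by simp

lemma Bg_mult: "x \<in> Bg g \<Longrightarrow> y \<in> Bg h \<Longrightarrow> x * y \<in> Bg (g + h)"
  using grading by (simp add: is_grading_def)

lemma homogeneous_decomposition_unique:
  "\<exists>!c. finite {g. c g \<noteq> 0} \<and> (\<forall>g. c g \<in> Bg g) \<and> b = (\<Sum>g\<in>{g. c g \<noteq> 0}. c g)"
  using grading by (simp add: is_grading_def)

definition hcomp :: "'b \<Rightarrow> 'g \<Rightarrow> 'b" where
  "hcomp b = (THE c. finite {g. c g \<noteq> 0} \<and> (\<forall>g. c g \<in> Bg g) \<and> b = (\<Sum>g\<in>{g. c g \<noteq> 0}. c g))"

abbreviation hsupp :: "'b \<Rightarrow> 'g set" where
  "hsupp b \<equiv> {g. hcomp b g \<noteq> 0}"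

lemma hcomp_spec: "finite (hsupp b) \<and> (\<forall>g. hcomp b g \<in> Bg g) \<and> b = sum (hcomp b) (hsupp b)"
  unfolding hcomp_def by (rule theI' [OF homogeneous_decomposition_unique])

lemma hcomp_in_Bg [simp]: "hcomp b g \<in> Bg g"
  using hcomp_spec by blast

lemma finite_hsupp [simp]: "finite (hsupp b)"
  using hcomp_spec by blast

lemma sum_hcomp:
  assumes "finite S" "hsupp b \<subseteq> S"
  shows "sum (hcomp b) S = b"
proof -
  have "sum (hcomp b) S = sum (hcomp b) (hsupp b)"
    using assms by (intro sum.mono_neutral_right) auto
  also have "\<dots> = b"
    using hcomp_spec[of b] by (elim conjE) (rule sym)
  finally show ?thesis .
qed

lemma hcomp_unique:
  assumes "finite S" "\<And>g. c g \<in> Bg g" "\<And>g. g \<notin> S \<Longrightarrow> c g = 0" "sum c S = b"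
  shows "hcomp b = c"
proof -
  have supp: "{g. c g \<noteq> 0} \<subseteq> S"
    using assms(3) by blast
  have "finite {g. c g \<noteq> 0}"
    using supp assms(1) by (rule finite_subset)
  moreover have "sum c {g. c g \<noteq> 0} = b"
    using supp assms(1,4) by (subst sum.mono_neutral_left[of S]) auto
  ultimately show ?thesis
    unfolding hcomp_def using assms(2)
    by (intro the1_equality[OF homogeneous_decomposition_unique]) simp
qed

lemma hcomp_homogeneous: "x \<in> Bg i \<Longrightarrow> hcomp x = (\<lambda>g. if g = i then x else 0)"
  by (rule hcomp_unique[of "{i}"]) auto

lemma hcomp_zero [simp]: "hcomp 0 g = 0"
  using hcomp_homogeneous[OF Bg_zero] by simp

lemma hsupp_empty_iff: "hsupp x = {} \<longleftrightarrow> x = 0"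
  using sum_hcomp[of "{}" x] by auto

lemma hcomp_add: "hcomp (x + y) g = hcomp x g + hcomp y g"
proof -
  let ?S = "hsupp x \<union> hsupp y"
  have "hcomp (x + y) = (\<lambda>g. hcomp x g + hcomp y g)"
  proof (rule hcomp_unique[of ?S])
    show "sum (\<lambda>g. hcomp x g + hcomp y g) ?S = x + y"
      by (simp add: sum.distrib sum_hcomp)
  qed (auto intro: Bg_add)
  then show ?thesis by simp
qed

lemma hcomp_sum: "hcomp (sum f S) g = (\<Sum>s\<in>S. hcomp (f s) g)"
  by (induction S rule: infinite_finite_induct) (simp_all add: hcomp_add)

lemma homogeneousI:
  assumes "\<And>g. g \<noteq> i \<Longrightarrow> hcomp x g = 0"
  shows "x \<in> Bg i"
proof -
  have "hsupp x \<subseteq> {i}"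
    using assms by blast
  then have "hcomp x i = x"
    using sum_hcomp[of "{i}" x] by simp
  then show ?thesis
    using hcomp_in_Bg[of x i] by simp
qed

lemma hcomp_mult_homogeneous:
  assumes s: "s \<in> Bg j"
  shows "hcomp (x * s) g = hcomp x (g - j) * s"
proof -
  have "hcomp (x * s) = (\<lambda>g. hcomp x (g - j) * s)"
  proof (rule hcomp_unique[of "(\<lambda>g. g + j) ` hsupp x"])
    have "sum (\<lambda>g. hcomp x (g - j) * s) ((\<lambda>g. g + j) ` hsupp x) = sum (hcomp x) (hsupp x) * s"
      by (simp add: sum.reindex inj_on_def sum_distrib_right)
    then show "sum (\<lambda>g. hcomp x (g - j) * s) ((\<lambda>g. g + j) ` hsupp x) = x * s"
      by (simp add: sum_hcomp)
    show "hcomp x (g - j) * s \<in> Bg g" for g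
      using Bg_mult[OF hcomp_in_Bg s, of x "g - j"] by simp
    show "hcomp x (g - j) * s = 0" if "g \<notin> (\<lambda>g. g + j) ` hsupp x" for g
    proof -
      have "g - j \<notin> hsupp x"
        using that by (metis (no_types, lifting) diff_add_cancel image_eqI)
      then show ?thesis
        by simp
    qed
  qed simp
  then show ?thesis by simp
qed

lemma Bg_cancel:
  assumes "x * s \<in> Bg i" "s \<in> Bg j" "s \<noteq> 0"
  shows "x \<in> Bg (i - j)"
proof (rule homogeneousI)
  fix g
  assume "g \<noteq> i - j"
  then have "hcomp (x * s) (g + j) = 0"
    using hcomp_homogeneous[OF assms(1)] by (auto simp: algebra_simps)
  then show "hcomp x g = 0"
    using hcomp_mult_homogeneous[OF assms(2), of x "g + j"] assms(3) by simp
qed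

lemma Bg_one [simp]: "1 \<in> Bg 0"
proof -
  obtain g where g: "hcomp 1 g \<noteq> 0"
    using hsupp_empty_iff[of 1] by auto
  have "1 * hcomp 1 g \<in> Bg g"
    by simp
  from Bg_cancel[OF this hcomp_in_Bg g] show ?thesis
    by simp
qed

lemma Bg_power: "x \<in> Bg g \<Longrightarrow> x ^ n \<in> Bg (nsmul n g)"
  by (induction n) (simp_all add: Bg_mult)

lemma Bg_of_nat: "of_nat n \<in> Bg 0"
  by (induction n) (simp_all add: Bg_add)

lemma hcomp_mult:
  "hcomp (x * y) k = (\<Sum>(g, h)\<in>hsupp x \<times> hsupp y. if g + h = k then hcomp x g * hcomp y h else 0)"
proof -
  have "x * y = sum (hcomp x) (hsupp x) * sum (hcomp y) (hsupp y)"
    by (simp add: sum_hcomp)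
  also have "\<dots> = (\<Sum>(g, h)\<in>hsupp x \<times> hsupp y. hcomp x g * hcomp y h)"
    by (simp add: sum_product sum.cartesian_product)
  finally have "hcomp (x * y) k = (\<Sum>(g, h)\<in>hsupp x \<times> hsupp y. hcomp (hcomp x g * hcomp y h) k)"
    by (simp add: hcomp_sum case_prod_beta)
  also have "\<dots> = (\<Sum>(g, h)\<in>hsupp x \<times> hsupp y. if g + h = k then hcomp x g * hcomp y h else 0)"
    by (intro sum.cong refl) (auto simp: hcomp_homogeneous[OF Bg_mult[OF hcomp_in_Bg hcomp_in_Bg]])
  finally show ?thesis .
qed

lemma hcomp_mult_greatest:
  fixes P :: "'g set"
  assumes P: "cone P" and a: "cone_greatest P (hsupp x) a" and b: "cone_greatest P (hsupp y) b"
  shows "hcomp (x * y) (a + b) = hcomp x a * hcomp y b"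
proof -
  have "(g, h) = (a, b)" if "g \<in> hsupp x" "h \<in> hsupp y" "g + h = a + b" for g h
  proof -
    have "a - g = 0 \<or> a - g \<in> P" "b - h = 0 \<or> b - h \<in> P"
      using a b that(1,2) unfolding cone_greatest_def by auto
    moreover have "(a - g) + (b - h) = (a + b) - (g + h)"
      by (simp add: algebra_simps)
    then have "(a - g) + (b - h) = 0"
      unfolding that(3) by simp
    ultimately have "a - g = 0 \<and> b - h = 0"
      by (rule cone_sum_eq_zero[OF P])
    then show ?thesis
      by simp
  qed
  then have "hcomp (x * y) (a + b) =
      (\<Sum>p\<in>hsupp x \<times> hsupp y. if p = (a, b) then hcomp x a * hcomp y b else 0)"
    unfolding hcomp_mult by (intro sum.cong refl) (auto split: if_splits)
  also have "\<dots> = hcomp x a * hcomp y b"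
    using a b by (simp add: cone_greatest_def)
  finally show ?thesis .
qed

lemma degree_of_homogeneous_product:
  fixes P :: "'g set"
  assumes P: "cone P" and xy: "x * y \<in> Bg k"
    and a: "cone_greatest P (hsupp x) a" and b: "cone_greatest P (hsupp y) b"
  shows "a + b = k"
proof (rule ccontr)
  assume "a + b \<noteq> k"
  then have "hcomp (x * y) (a + b) = 0"
    using hcomp_homogeneous[OF xy] by simp
  then show False
    using hcomp_mult_greatest[OF P a b] a b by (simp add: cone_greatest_def)
qed

text \<open>The greatest and the least degree of \<open>x\<close> (for the order given by \<open>P\<close>) both add up
  with those of \<open>y\<close> to the degree of \<open>x * y\<close>; hence they coincide.\<close>

lemma homogeneous_factor:
  fixes P :: "'g set"
  assumes P: "total_cone P" and xy: "x * y \<in> Bg k" and "x \<noteq> 0" "y \<noteq> 0"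
  shows "\<exists>i. x \<in> Bg i"
proof -
  let ?Q = "uminus ` P"
  have cones: "cone P" "cone ?Q" "total_cone ?Q"
    using P cone_uminus total_cone_uminus by (auto simp: total_cone_def)
  have ne: "hsupp x \<noteq> {}" "hsupp y \<noteq> {}"
    using assms(3,4) hsupp_empty_iff by blast+
  obtain a where a: "cone_greatest P (hsupp x) a"
    using total_cone_greatest_exists[OF P finite_hsupp ne(1)] by blast
  obtain b where b: "cone_greatest P (hsupp y) b"
    using total_cone_greatest_exists[OF P finite_hsupp ne(2)] by blast
  obtain a' where a': "cone_greatest ?Q (hsupp x) a'"
    using total_cone_greatest_exists[OF cones(3) finite_hsupp ne(1)] by blast
  obtain b' where b': "cone_greatest ?Q (hsupp y) b'"
    using total_cone_greatest_exists[OF cones(3) finite_hsupp ne(2)] by blast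
  have "a + b = k" "a' + b' = k"
    using degree_of_homogeneous_product[OF cones(1) xy a b]
      degree_of_homogeneous_product[OF cones(2) xy a' b'] by simp_all
  then have "(a - a') + (b - b') = 0"
    by (simp add: algebra_simps)
  moreover have "a - a' = 0 \<or> a - a' \<in> P" "b - b' = 0 \<or> b - b' \<in> P"
    using a b a' b' unfolding cone_greatest_def by auto
  ultimately have "a - a' = 0"
    using cone_sum_eq_zero[OF cones(1)] by blast
  then have "a' = a"
    by simp
  have "x \<in> Bg a"
  proof (rule homogeneousI)
    fix g
    assume "g \<noteq> a"
    show "hcomp x g = 0"
    proof (rule ccontr)
      assume "hcomp x g \<noteq> 0"
      then have "g \<in> hsupp x"
        by simp
      then have "a - g \<in> P" "g - a \<in> P"
        using a a' \<open>a' = a\<close> \<open>g \<noteq> a\<close> unfolding cone_greatest_def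
        by (simp_all add: uminus_image_iff)
      then have "(a - g) + (g - a) \<in> P"
        using cone_add[OF cones(1)] by blast
      then show False
        using cone_zero[OF cones(1)] by simp
    qed
  qed
  then show ?thesis ..
qed

lemma subfield_subset_Bg0:
  assumes tf: "torsion_free_group TYPE('g)" and k: "is_subfield k"
  shows "k \<subseteq> Bg 0"
proof
  obtain P :: "'g set" where P: "total_cone P"
    using torsion_free_total_cone[OF tf] by blast
  have homogeneous: "\<exists>i. z \<in> Bg i" if "z \<in> k" for z
  proof (cases "z = 0")
    case False
    then obtain w where "z * w = 1"
      using k \<open>z \<in> k\<close> unfolding is_subfield_def by blast
    moreover from this have "w \<noteq> 0"
      by auto
    ultimately show ?thesis
      using homogeneous_factor[OF P, of z w 0] False by simp
  qed (use Bg_zero in blast)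
  fix x
  assume "x \<in> k"
  obtain i where i: "x \<in> Bg i"
    using homogeneous \<open>x \<in> k\<close> by blast
  obtain j where j: "1 + x \<in> Bg j"
    using homogeneous k \<open>x \<in> k\<close> unfolding is_subfield_def by blast
  show "x \<in> Bg 0"
  proof (rule ccontr)
    assume "x \<notin> Bg 0"
    then have "i \<noteq> 0" "x \<noteq> 0"
      using i by auto
    have "hcomp (1 + x) g = (if g = 0 then 1 else 0) + (if g = i then x else 0)" for g
      by (simp add: hcomp_add hcomp_homogeneous[OF Bg_one] hcomp_homogeneous[OF i])
    then have "hcomp (1 + x) 0 \<noteq> 0" "hcomp (1 + x) i \<noteq> 0"
      using \<open>i \<noteq> 0\<close> \<open>x \<noteq> 0\<close> by auto
    then show False
      using hcomp_homogeneous[OF j] \<open>i \<noteq> 0\<close> by (auto split: if_splits)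
  qed
qed

lemma subfield_Int_Bg0:
  assumes k: "is_subfield k"
  shows "is_subfield (k \<inter> Bg 0)"
  unfolding is_subfield_def
proof (intro conjI ballI impI)
  show "0 \<in> k \<inter> Bg 0" "1 \<in> k \<inter> Bg 0"
    using k by (simp_all add: is_subfield_def)
  fix x y
  assume "x \<in> k \<inter> Bg 0" "y \<in> k \<inter> Bg 0"
  then show "x + y \<in> k \<inter> Bg 0" "x * y \<in> k \<inter> Bg 0" "- x \<in> k \<inter> Bg 0"
    using k Bg_mult[of x 0 y 0] by (auto simp: is_subfield_def Bg_add Bg_uminus)
next
  fix x
  assume x: "x \<in> k \<inter> Bg 0" "x \<noteq> 0"
  then obtain y where "y \<in> k" "x * y = 1"
    using k unfolding is_subfield_def by blast
  moreover from this have "y \<in> Bg (0 - 0)"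
    using x by (intro Bg_cancel[of y x 0 0]) (simp_all add: mult.commute)
  ultimately show "\<exists>y\<in>k \<inter> Bg 0. x * y = 1"
    by auto
qed

end

section \<open>Subrings, subfields and homogeneous fractions\<close>

definition is_subring :: "'a::comm_ring_1 set \<Rightarrow> bool" where
  "is_subring S \<longleftrightarrow> 1 \<in> S \<and> (\<forall>x\<in>S. \<forall>y\<in>S. x + y \<in> S \<and> x * y \<in> S \<and> - x \<in> S)"

lemma subring_one: "is_subring S \<Longrightarrow> 1 \<in> S"
  and subring_add: "is_subring S \<Longrightarrow> x \<in> S \<Longrightarrow> y \<in> S \<Longrightarrow> x + y \<in> S"
  and subring_mult: "is_subring S \<Longrightarrow> x \<in> S \<Longrightarrow> y \<in> S \<Longrightarrow> x * y \<in> S"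
  and subring_uminus: "is_subring S \<Longrightarrow> x \<in> S \<Longrightarrow> - x \<in> S"
  by (simp_all add: is_subring_def)

lemma subring_zero: "is_subring S \<Longrightarrow> 0 \<in> S"
  using subring_add[of S 1 "- 1"] by (simp add: subring_one subring_uminus)

lemma subring_prod: "is_subring A \<Longrightarrow> (\<And>i. i \<in> I \<Longrightarrow> f i \<in> A) \<Longrightarrow> prod f I \<in> A"
  by (induction I rule: infinite_finite_induct) (simp_all add: is_subring_def)

lemma subring_power: "is_subring A \<Longrightarrow> x \<in> A \<Longrightarrow> x ^ n \<in> A"
  by (induction n) (simp_all add: is_subring_def)

lemma subfield_inverse:
  fixes L :: "'a::field set"
  assumes L: "is_subfield L" and x: "x \<in> L"
  shows "inverse x \<in> L"
proof (cases "x = 0")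
  case False
  then obtain y where "y \<in> L" "x * y = 1"
    using L x unfolding is_subfield_def by blast
  then show ?thesis
    by (simp add: inverse_unique)
qed (use L in \<open>simp add: is_subfield_def\<close>)

lemma subfield_divide:
  fixes L :: "'a::field set"
  assumes "is_subfield L" "x \<in> L" "y \<in> L"
  shows "x / y \<in> L"
  using assms subfield_inverse[OF assms(1,3)] unfolding is_subfield_def divide_inverse by blast

lemma poly_in_subfield:
  fixes L :: "'a::field set"
  assumes L: "is_subfield L" and "poly_over L p" "t \<in> L"
  shows "poly p t \<in> L"
  using \<open>poly_over L p\<close>
proof (induction p)
  case (pCons a p)
  then have "a \<in> L" "poly_over L p"
    unfolding poly_over_def by (metis coeff_pCons_0, metis coeff_pCons_Suc)
  then show ?case
    using pCons.IH L \<open>t \<in> L\<close> unfolding is_subfield_def by simp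
qed (use L in \<open>simp add: is_subfield_def\<close>)

lemma to_fract_power: "to_fract (x ^ n) = to_fract x ^ n"
  by (induction n) simp_all

lemma poly_fract_poly: "poly (fract_poly p) (to_fract x) = to_fract (poly p x)"
  by (induction p) (simp_all add: map_poly_pCons)

lemma poly_fract_poly_rescale:
  assumes "c \<noteq> 0" "d \<noteq> 0"
  shows "poly (pcompose (fract_poly W) [:0, to_fract c / to_fract d:])
      (to_fract r * to_fract d / to_fract c)
    = to_fract (poly W r)"
  using assms by (simp add: poly_pcompose poly_fract_poly)

lemma fract_poly_transcendental:
  fixes r :: "'b::idom"
  assumes A: "is_subring A"
    and r: "\<And>P. (\<And>j. coeff P j \<in> A) \<Longrightarrow> poly P r = 0 \<Longrightarrow> P = 0"
    and p: "\<And>j. coeff p j \<in> {Fraction_Field.Fract a s | a s. a \<in> A \<and> s \<in> A \<and> s \<noteq> 0}"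
    and root: "poly p (to_fract r) = 0"
  shows "p = 0"
proof -
  have "\<forall>j. \<exists>a s. a \<in> A \<and> s \<in> A \<and> s \<noteq> 0 \<and> coeff p j = Fraction_Field.Fract a s"
    using p by blast
  then obtain a s where as:
    "\<And>j. a j \<in> A \<and> s j \<in> A \<and> s j \<noteq> 0 \<and> coeff p j = Fraction_Field.Fract (a j) (s j)"
    by metis
  define n where "n = degree p"
  define c where "c = (\<Prod>j\<le>n. s j)"
  define P where "P = (\<Sum>j\<le>n. monom (a j * (\<Prod>k\<in>{..n} - {j}. s k)) j)"
  have "c \<noteq> 0"
    using as by (simp add: c_def)
  have coeff_P: "coeff P j = (if j \<le> n then a j * (\<Prod>k\<in>{..n} - {j}. s k) else 0)" for j
    by (simp add: P_def coeff_sum)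
  have "fract_poly P = smult (to_fract c) p"
  proof (rule poly_eqI)
    fix j
    show "coeff (fract_poly P) j = coeff (smult (to_fract c) p) j"
    proof (cases "j \<le> n")
      case True
      then have "c = s j * (\<Prod>k\<in>{..n} - {j}. s k)"
        by (simp add: c_def prod.remove)
      then show ?thesis
        using True as[of j] by (simp add: coeff_map_poly coeff_P Fract_conv_to_fract field_simps)
    next
      case False
      then show ?thesis
        by (simp add: coeff_map_poly coeff_P n_def coeff_eq_0)
    qed
  qed
  then have "to_fract (poly P r) = 0"
    using root by (simp flip: poly_fract_poly)
  moreover have "coeff P j \<in> A" for j
    using as A by (simp add: coeff_P subring_zero subring_prod is_subring_def)
  ultimately have "P = 0"
    using r by simp
  then show ?thesis
    using \<open>fract_poly P = smult (to_fract c) p\<close> \<open>c \<noteq> 0\<close> by simp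
qed

definition HFrac_deg :: "('g::ab_group_add \<Rightarrow> 'b::idom set) \<Rightarrow> 'b set \<Rightarrow> 'g \<Rightarrow> 'b fract set" where
  "HFrac_deg Bg S g = {Fraction_Field.Fract x y | x y i j.
     x \<in> S \<inter> Bg i \<and> y \<in> S \<inter> Bg j \<and> y \<noteq> 0 \<and> i - j = g}"

lemma Fract_in_HFrac_deg:
  "x \<in> S \<inter> Bg i \<Longrightarrow> y \<in> S \<inter> Bg j \<Longrightarrow> y \<noteq> 0 \<Longrightarrow> Fraction_Field.Fract x y \<in> HFrac_deg Bg S (i - j)"
  unfolding HFrac_deg_def by blast

lemma HFrac_deg_0: "HFrac_deg Bg S 0 = HFrac Bg S"
  unfolding HFrac_deg_def HFrac_def by auto

lemma HFrac_mono: "S \<subseteq> T \<Longrightarrow> HFrac Bg S \<subseteq> HFrac Bg T"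
  unfolding HFrac_def by blast

lemma HFrac_subset_fractions:
  "HFrac Bg S \<subseteq> {Fraction_Field.Fract a s | a s. a \<in> S \<and> s \<in> S \<and> s \<noteq> 0}"
  unfolding HFrac_def by blast

context graded
begin

lemma HFrac_memI:
  "x \<in> S \<inter> Bg i \<Longrightarrow> y \<in> S \<inter> Bg i \<Longrightarrow> y \<noteq> 0 \<Longrightarrow> Fraction_Field.Fract x y \<in> HFrac Bg S"
  unfolding HFrac_def by blast

lemma HFrac_memE:
  assumes "u \<in> HFrac Bg S"
  obtains x y i where "u = Fraction_Field.Fract x y" "x \<in> S \<inter> Bg i" "y \<in> S \<inter> Bg i" "y \<noteq> 0"
  using assms unfolding HFrac_def by blast

lemma HFrac_deg_mult:
  assumes S: "\<And>x y. x \<in> S \<Longrightarrow> y \<in> S \<Longrightarrow> x * y \<in> S"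
    and "u \<in> HFrac_deg Bg S g" "v \<in> HFrac_deg Bg S h"
  shows "u * v \<in> HFrac_deg Bg S (g + h)"
proof -
  obtain x y i j where u: "u = Fraction_Field.Fract x y"
    "x \<in> S \<inter> Bg i" "y \<in> S \<inter> Bg j" "y \<noteq> 0" "i - j = g"
    using assms(2) unfolding HFrac_deg_def by blast
  obtain x' y' i' j' where v: "v = Fraction_Field.Fract x' y'"
    "x' \<in> S \<inter> Bg i'" "y' \<in> S \<inter> Bg j'" "y' \<noteq> 0" "i' - j' = h"
    using assms(3) unfolding HFrac_deg_def by blast
  have "Fraction_Field.Fract (x * x') (y * y') \<in> HFrac_deg Bg S ((i + i') - (j + j'))"
    using u v by (intro Fract_in_HFrac_deg) (simp_all add: S Bg_mult)
  moreover have "(i + i') - (j + j') = g + h"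
    using u(5) v(5) by (simp add: algebra_simps)
  ultimately show ?thesis
    using u(1) v(1) by simp
qed

lemma HFrac_deg_divide:
  assumes S: "\<And>x y. x \<in> S \<Longrightarrow> y \<in> S \<Longrightarrow> x * y \<in> S"
    and "u \<in> HFrac_deg Bg S g" "v \<in> HFrac_deg Bg S g" "v \<noteq> 0"
  shows "u / v \<in> HFrac Bg S"
proof -
  obtain x y i j where u: "u = Fraction_Field.Fract x y"
    "x \<in> S \<inter> Bg i" "y \<in> S \<inter> Bg j" "y \<noteq> 0" "i - j = g"
    using assms(2) unfolding HFrac_deg_def by blast
  obtain x' y' i' j' where v: "v = Fraction_Field.Fract x' y'"
    "x' \<in> S \<inter> Bg i'" "y' \<in> S \<inter> Bg j'" "y' \<noteq> 0" "i' - j' = g"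
    using assms(3) unfolding HFrac_deg_def by blast
  have "x' \<noteq> 0"
    using v(1) assms(4) by (auto simp: Zero_fract_def eq_fract)
  then have "Fraction_Field.Fract (x * y') (y * x') \<in> HFrac_deg Bg S ((i + j') - (j + i'))"
    using u v by (intro Fract_in_HFrac_deg) (simp_all add: S Bg_mult)
  moreover have "(i + j') - (j + i') = 0"
    using u(5) v(5) by (simp add: algebra_simps)
  ultimately show ?thesis
    using u(1) v(1) by (simp add: HFrac_deg_0)
qed

lemma to_fract_in_HFrac: "x \<in> S \<inter> Bg 0 \<Longrightarrow> 1 \<in> S \<Longrightarrow> to_fract x \<in> HFrac Bg S"
  using HFrac_memI[of x S 0 1] by (simp add: to_fract_def)

lemma HFrac_add:
  assumes S: "is_subring S" and "u \<in> HFrac Bg S" "v \<in> HFrac Bg S"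
  shows "u + v \<in> HFrac Bg S"
proof -
  obtain x y i where u: "u = Fraction_Field.Fract x y" "x \<in> S \<inter> Bg i" "y \<in> S \<inter> Bg i" "y \<noteq> 0"
    using assms(2) by (rule HFrac_memE)
  obtain x' y' i' where v: "v = Fraction_Field.Fract x' y'"
    "x' \<in> S \<inter> Bg i'" "y' \<in> S \<inter> Bg i'" "y' \<noteq> 0"
    using assms(3) by (rule HFrac_memE)
  have "x * y' \<in> Bg (i + i')" "x' * y \<in> Bg (i + i')" "y * y' \<in> Bg (i + i')"
    using Bg_mult[of x i y' i'] Bg_mult[of x' i' y i] Bg_mult[of y i y' i'] u v
    by (simp_all add: add.commute)
  moreover have "x * y' + x' * y \<in> S" "y * y' \<in> S"
    using u v by (simp_all add: S subring_add subring_mult)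
  ultimately have "Fraction_Field.Fract (x * y' + x' * y) (y * y') \<in> HFrac Bg S"
    using u(4) v(4) by (intro HFrac_memI) (simp_all add: Bg_add)
  then show ?thesis
    using u(1,4) v(1,4) by simp
qed

lemma HFrac_subfield:
  assumes S: "is_subring S"
  shows "is_subfield (HFrac Bg S)"
proof -
  have zero_one: "0 \<in> HFrac Bg S" "1 \<in> HFrac Bg S"
    using HFrac_memI[of 0 S 0 1] HFrac_memI[of 1 S 0 1] S
    by (simp_all add: subring_zero subring_one Zero_fract_def One_fract_def)
  have mult: "u * v \<in> HFrac Bg S" if "u \<in> HFrac Bg S" "v \<in> HFrac Bg S" for u v
    using HFrac_deg_mult[OF subring_mult[OF S], of u 0 v 0] that by (simp add: HFrac_deg_0)
  have uminus: "- u \<in> HFrac Bg S" if u: "u \<in> HFrac Bg S" for u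
  proof -
    obtain x y i where "u = Fraction_Field.Fract x y" "x \<in> S \<inter> Bg i" "y \<in> S \<inter> Bg i" "y \<noteq> 0"
      using u by (rule HFrac_memE)
    then show ?thesis
      using HFrac_memI[of "- x" S i y] by (simp add: S subring_uminus Bg_uminus)
  qed
  have inverse: "\<exists>v\<in>HFrac Bg S. u * v = 1" if u: "u \<in> HFrac Bg S" "u \<noteq> 0" for u
  proof -
    obtain x y i where xy: "u = Fraction_Field.Fract x y" "x \<in> S \<inter> Bg i" "y \<in> S \<inter> Bg i" "y \<noteq> 0"
      using u(1) by (rule HFrac_memE)
    then have "x \<noteq> 0"
      using u(2) by (auto simp: fract_collapse)
    then have "Fraction_Field.Fract y x \<in> HFrac Bg S" "u * Fraction_Field.Fract y x = 1"
      using xy HFrac_memI[of y S i x] by (simp_all add: One_fract_def eq_fract)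
    then show ?thesis
      by blast
  qed
  show ?thesis
    unfolding is_subfield_def
    by (intro conjI ballI impI zero_one HFrac_add[OF S] mult uminus inverse)
qed

lemma rational_function_normalize:
  assumes S: "\<And>x y. x \<in> S \<Longrightarrow> y \<in> S \<Longrightarrow> x * y \<in> S"
    and U: "\<And>j. coeff U j \<in> HFrac_deg Bg S g" and V: "\<And>j. coeff V j \<in> HFrac_deg Bg S g"
    and "poly V t \<noteq> 0"
  shows "\<exists>p q. poly_over (HFrac Bg S) p \<and> poly_over (HFrac Bg S) q \<and> poly q t \<noteq> 0 \<and>
    poly U t / poly V t = poly p t / poly q t"
proof -
  define v where "v = lead_coeff V"
  have "v \<noteq> 0"
    using \<open>poly V t \<noteq> 0\<close> by (auto simp: v_def)
  have "v \<in> HFrac_deg Bg S g"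
    using V by (simp add: v_def)
  have "poly_over (HFrac Bg S) (smult (inverse v) W)"
    if W: "\<And>j. coeff W j \<in> HFrac_deg Bg S g" for W
    unfolding poly_over_def
    using HFrac_deg_divide[OF S W \<open>v \<in> HFrac_deg Bg S g\<close> \<open>v \<noteq> 0\<close>]
    by (simp add: divide_inverse mult.commute)
  moreover have "poly (smult (inverse v) V) t \<noteq> 0"
    using \<open>v \<noteq> 0\<close> \<open>poly V t \<noteq> 0\<close> by simp
  moreover have "poly U t / poly V t = poly (smult (inverse v) U) t / poly (smult (inverse v) V) t"
    using \<open>v \<noteq> 0\<close> by simp
  ultimately show ?thesis
    using U V by blast
qed

lemma Gsupp_subring:
  assumes A: "is_subring A"
  shows "Gsupp Bg A = {\<gamma> - \<delta> | \<gamma> \<delta>. (\<exists>c\<in>A \<inter> Bg \<gamma>. c \<noteq> 0) \<and> (\<exists>d\<in>A \<inter> Bg \<delta>. d \<noteq> 0)}"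
proof -
  let ?M = "{g. \<exists>x\<in>A \<inter> Bg g. x \<noteq> 0}"
  have "0 \<in> ?M"
    using A by (auto simp: is_subring_def intro!: bexI[of _ 1])
  moreover have "u + v \<in> ?M" if uv: "u \<in> ?M" "v \<in> ?M" for u v
  proof -
    obtain x y where "x \<in> A \<inter> Bg u" "y \<in> A \<inter> Bg v" "x \<noteq> 0" "y \<noteq> 0"
      using uv by blast
    then have "x * y \<in> A \<inter> Bg (u + v)" "x * y \<noteq> 0"
      using A by (auto simp: is_subring_def Bg_mult)
    then show ?thesis
      by blast
  qed
  ultimately show ?thesis
    unfolding Gsupp_def by (subst gen_subgroup_submonoid) auto
qed

lemma slice_quotient_in_HFrac:
  assumes "r \<in> Bg \<rho>" "c \<in> Bg \<gamma>" "c \<noteq> 0" "d \<in> Bg \<delta>" "\<rho> = \<gamma> - \<delta>"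
  shows "Fraction_Field.Fract (r * d) c \<in> HFrac Bg UNIV"
proof -
  have "r * d \<in> Bg \<gamma>"
    using Bg_mult[OF assms(1,4)] assms(5) by simp
  then show ?thesis
    using assms(2,3) by (intro HFrac_memI[where i = \<gamma>]) simp_all
qed

lemma coeff_rescale_in_HFrac_deg:
  assumes S: "is_subring S"
    and W: "\<And>j. coeff W j \<in> S \<inter> Bg (g - nsmul j (\<gamma> - \<delta>))"
    and c: "c \<in> S \<inter> Bg \<gamma>" and d: "d \<in> S \<inter> Bg \<delta>" "d \<noteq> 0"
  shows "coeff (pcompose (fract_poly W) [:0, to_fract c / to_fract d:]) j \<in> HFrac_deg Bg S g"
proof -
  have "coeff (pcompose (fract_poly W) [:0, to_fract c / to_fract d:]) j
      = Fraction_Field.Fract (c ^ j * coeff W j) (d ^ j)"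
    using d(2)
    by (simp add: coeff_pcompose_linear coeff_map_poly Fract_conv_to_fract to_fract_power power_divide)
  moreover have "Fraction_Field.Fract (c ^ j * coeff W j) (d ^ j)
      \<in> HFrac_deg Bg S ((nsmul j \<gamma> + (g - nsmul j (\<gamma> - \<delta>))) - nsmul j \<delta>)"
    using S W[of j] c d
    by (intro Fract_in_HFrac_deg) (auto simp: Bg_mult Bg_power subring_power is_subring_def)
  moreover have "(nsmul j \<gamma> + (g - nsmul j (\<gamma> - \<delta>))) - nsmul j \<delta> = g"
    by (simp add: nsmul_diff_right)
  ultimately show ?thesis
    by simp
qed

end

section \<open>Locally nilpotent derivations\<close>

lemma sum_choose_Suc:
  fixes F G :: "nat \<Rightarrow> 'a::comm_ring_1"
  shows "(\<Sum>k\<le>n. of_nat (n choose k) * (F (Suc k) * G (n - k) + F k * G (Suc (n - k))))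
       = (\<Sum>k\<le>Suc n. of_nat (Suc n choose k) * F k * G (Suc n - k))"
proof -
  have decomp: "{0..n+1} = {0} \<union> {n + 1} \<union> {1..n}" by auto
  have "(\<Sum>k\<le>n. of_nat (n choose k) * (F (Suc k) * G (n - k) + F k * G (Suc (n - k))))
     = (\<Sum>k\<le>n. of_nat (n choose k) * F (k+1) * G (n-k)) +
      (\<Sum>k\<le>n. of_nat (n choose k) * F k * G (n - k + 1))"
    by (simp add: sum.distrib[symmetric] algebra_simps)
  also have "\<dots> = (\<Sum>k\<le>n. of_nat (n choose k) * F k * G (n + 1 - k)) +
      (\<Sum>k=1..n+1. of_nat (n choose (k - 1)) * F k * G (n + 1 - k))"
    by (simp add: atMost_atLeast0 sum.shift_bounds_cl_Suc_ivl Suc_diff_le field_simps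
        del: sum.cl_ivl_Suc)
  also have "\<dots> = G (n + 1) * F 0 +
      (\<Sum>k=1..n. of_nat (n choose k) * F k * G (n + 1 - k)) + (F (n + 1) * G 0 +
      (\<Sum>k=1..n. of_nat (n choose (k - 1)) * F k * G (n + 1 - k)))"
    using sum.nat_ivl_Suc' [of 1 n "\<lambda>k. of_nat (n choose (k-1)) * F k * G (n + 1 - k)"]
    by (simp add: sum.atLeast_Suc_atMost atMost_atLeast0 algebra_simps)
  also have "\<dots> = F (n + 1) * G 0 + G (n + 1) * F 0 +
      (\<Sum>k=1..n. of_nat (n + 1 choose k) * F k * G (n + 1 - k))"
    by (auto simp add: field_simps sum.distrib [symmetric] choose_reduce_nat)
  also have "\<dots> = (\<Sum>k\<le>n+1. of_nat (n + 1 choose k) * F k * G (n + 1 - k))"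
    using decomp by (simp add: atMost_atLeast0 field_simps)
  finally show ?thesis by simp
qed

locale lnd =
  fixes D :: "'b::{idom,ring_char_0} \<Rightarrow> 'b"
  assumes derivation: "is_derivation D" and nilpotent: "locally_nilpotent D"
begin

abbreviation ker :: "'b set" where
  "ker \<equiv> {b. D b = 0}"

lemma D_add: "D (x + y) = D x + D y"
  using derivation by (simp add: is_derivation_def)

lemma D_mult: "D (x * y) = x * D y + y * D x"
  using derivation by (simp add: is_derivation_def)

lemma D_zero [simp]: "D 0 = 0"
  using D_add[of 0 0] by simp

lemma D_one [simp]: "D 1 = 0"
  using D_mult[of 1 1] by simp

lemma D_uminus: "D (- x) = - D x"
  using D_add[of x "- x"] by (simp add: add_eq_0_iff)

lemma D_diff: "D (x - y) = D x - D y"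
  using D_add[of x "- y"] by (simp add: D_uminus)

lemma D_sum: "D (sum f S) = (\<Sum>s\<in>S. D (f s))"
  by (induction S rule: infinite_finite_induct) (simp_all add: D_add)

lemma D_of_nat [simp]: "D (of_nat n) = 0"
  by (induction n) (simp_all add: D_add)

lemma D_fact [simp]: "D (fact n) = 0"
  by (metis D_of_nat of_nat_fact)

lemma D_ker_mult: "D c = 0 \<Longrightarrow> D (c * x) = c * D x"
  by (simp add: D_mult)

lemma D_power: "D (x ^ Suc n) = of_nat (Suc n) * x ^ n * D x"
  by (induction n) (simp_all add: D_mult algebra_simps)

lemma ker_subring: "is_subring ker"
  by (simp add: is_subring_def D_add D_mult D_uminus)

lemma ker_mult: "D x = 0 \<Longrightarrow> D y = 0 \<Longrightarrow> D (x * y) = 0"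
  by (simp add: D_mult)

lemma ker_power: "D x = 0 \<Longrightarrow> D (x ^ n) = 0"
  by (induction n) (simp_all add: ker_mult)

lemma funpow_D_zero [simp]: "(D ^^ n) 0 = 0"
  by (induction n) simp_all

lemma funpow_D_diff: "(D ^^ n) (x - y) = (D ^^ n) x - (D ^^ n) y"
  by (induction n) (simp_all add: D_diff)

lemma funpow_D_ker_mult: "D c = 0 \<Longrightarrow> (D ^^ n) (c * x) = c * (D ^^ n) x"
  by (induction n) (simp_all add: D_ker_mult)

lemma leibniz:
  "(D ^^ n) (x * y) = (\<Sum>k\<le>n. of_nat (n choose k) * (D ^^ k) x * (D ^^ (n - k)) y)"
proof (induction n)
  case (Suc n)
  have "(D ^^ Suc n) (x * y) = (\<Sum>k\<le>n. D (of_nat (n choose k) * ((D ^^ k) x * (D ^^ (n - k)) y)))"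
    by (simp add: Suc D_sum mult.assoc)
  also have "\<dots> = (\<Sum>k\<le>n. of_nat (n choose k) *
      ((D ^^ Suc k) x * (D ^^ (n - k)) y + (D ^^ k) x * (D ^^ Suc (n - k)) y))"
    by (simp add: D_ker_mult D_mult algebra_simps)
  also have "\<dots> = (\<Sum>k\<le>Suc n. of_nat (Suc n choose k) * (D ^^ k) x * (D ^^ (Suc n - k)) y)"
    by (rule sum_choose_Suc)
  finally show ?case .
qed simp

lemma exists_last_nonzero_iterate:
  assumes "x \<noteq> 0"
  shows "\<exists>m. (D ^^ m) x \<noteq> 0 \<and> (D ^^ Suc m) x = 0"
proof -
  define n where "n = (LEAST n. (D ^^ n) x = 0)"
  have "(D ^^ n) x = 0"
    unfolding n_def using nilpotent by (auto simp: locally_nilpotent_def intro: LeastI_ex)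
  moreover have "n \<noteq> 0"
    using calculation assms by (metis funpow_0)
  then obtain m where "n = Suc m"
    using not0_implies_Suc by blast
  moreover have "(D ^^ m) x \<noteq> 0"
    using not_less_Least[of m "\<lambda>n. (D ^^ n) x = 0"] \<open>n = Suc m\<close> unfolding n_def by simp
  ultimately show ?thesis
    by blast
qed

lemma funpow_D_vanish: "(D ^^ Suc m) x = 0 \<Longrightarrow> m < k \<Longrightarrow> (D ^^ k) x = 0"
  by (metis Suc_leI funpow_D_zero funpow_add le_add_diff_inverse2 o_apply)

lemma leibniz_top:
  assumes "(D ^^ Suc m) x = 0" "(D ^^ Suc n) y = 0"
  shows "(D ^^ (m + n)) (x * y) = of_nat ((m + n) choose m) * (D ^^ m) x * (D ^^ n) y"
proof -
  have "of_nat ((m + n) choose k) * (D ^^ k) x * (D ^^ (m + n - k)) y = 0"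
    if "k \<le> m + n" "k \<noteq> m" for k
  proof (cases "m < k")
    case True
    then show ?thesis
      using funpow_D_vanish[OF assms(1)] by simp
  next
    case False
    then have "n < m + n - k"
      using that by simp
    then show ?thesis
      using funpow_D_vanish[OF assms(2)] by simp
  qed
  then have "(\<Sum>k\<le>m + n. of_nat ((m + n) choose k) * (D ^^ k) x * (D ^^ (m + n - k)) y)
      = (\<Sum>k\<in>{m}. of_nat ((m + n) choose k) * (D ^^ k) x * (D ^^ (m + n - k)) y)"
    by (intro sum.mono_neutral_right) auto
  then show ?thesis
    by (simp add: leibniz)
qed

lemma unit_in_ker:
  assumes "x * y = 1"
  shows "D x = 0"
proof -
  have "x \<noteq> 0" "y \<noteq> 0"
    using assms by auto
  obtain m where m: "(D ^^ m) x \<noteq> 0" "(D ^^ Suc m) x = 0"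
    using exists_last_nonzero_iterate[OF \<open>x \<noteq> 0\<close>] by blast
  obtain n where n: "(D ^^ n) y \<noteq> 0" "(D ^^ Suc n) y = 0"
    using exists_last_nonzero_iterate[OF \<open>y \<noteq> 0\<close>] by blast
  have "(D ^^ (m + n)) 1 \<noteq> 0"
    using leibniz_top[OF m(2) n(2)] m(1) n(1) assms by simp
  then have "m + n = 0"
    by (cases "m + n") (simp_all add: funpow_Suc_right del: funpow.simps)
  then show ?thesis
    using m(2) by simp
qed

lemma subfield_subset_ker:
  assumes "is_subfield k"
  shows "k \<subseteq> ker"
proof
  fix x
  assume "x \<in> k"
  show "x \<in> ker"
  proof (cases "x = 0")
    case False
    then obtain y where "x * y = 1"
      using assms \<open>x \<in> k\<close> unfolding is_subfield_def by blast
    then show ?thesis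
      by (simp add: unit_in_ker)
  qed simp
qed

lemma funpow_D_power_slice:
  assumes "D (D r) = 0"
  shows "(D ^^ m) (r ^ m) = of_nat (fact m) * D r ^ m"
proof (induction m)
  case (Suc m)
  have "(D ^^ Suc m) (r ^ Suc m) = (D ^^ m) (D (r ^ Suc m))"
    by (simp only: funpow_Suc_right o_apply)
  also have "\<dots> = (D ^^ m) ((of_nat (Suc m) * D r) * r ^ m)"
    unfolding D_power by (simp only: ac_simps)
  also have "\<dots> = of_nat (Suc m) * D r * (D ^^ m) (r ^ m)"
    using assms by (intro funpow_D_ker_mult) (simp add: D_mult D_add)
  finally show ?case
    by (simp add: Suc algebra_simps)
qed simp

lemma D_poly:
  assumes "\<And>j. D (coeff P j) = 0"
  shows "D (poly P r) = poly (pderiv P) r * D r"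
  using assms
proof (induction P)
  case (pCons c p)
  then have "D c = 0" "D (poly p r) = poly (pderiv p) r * D r"
    using pCons.prems[of 0] pCons.prems[of "Suc _"] by simp_all
  then show ?case
    by (simp add: D_add D_mult pderiv_pCons algebra_simps)
qed simp

text \<open>Applying \<open>D\<close> to a relation of least degree yields the relation given by its derivative,
  because \<open>D r\<close> is a nonzero constant.\<close>

lemma slice_transcendental:
  assumes "D r \<noteq> 0" "\<And>j. D (coeff P j) = 0" "poly P r = 0"
  shows "P = 0"
  using assms(2,3)
proof (induction "degree P" arbitrary: P rule: less_induct)
  case less
  show ?case
  proof (cases "degree P = 0")
    case True
    then obtain c where "P = [:c:]"
      by (metis degree_0_id)
    then show ?thesis
      using less.prems(2) by simp
  next
    case False
    have "D (coeff (pderiv P) j) = 0" for j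
      using less.prems(1)[of "Suc j"] by (simp add: coeff_pderiv D_mult D_add)
    moreover have "poly (pderiv P) r = 0"
      using D_poly[OF less.prems(1), of r] less.prems(2) assms(1) by simp
    moreover have "degree (pderiv P) < degree P"
      using False by (simp add: degree_pderiv)
    ultimately have "pderiv P = 0"
      using less.hyps by blast
    then show ?thesis
      using False by (simp add: pderiv_eq_0_iff)
  qed
qed

lemma slice_fract_transcendental:
  assumes "D r \<noteq> 0" "c \<in> ker" "d \<in> ker" "c \<noteq> 0" "d \<noteq> 0"
    and p: "\<And>j. coeff p j \<in> {Fraction_Field.Fract a s | a s. a \<in> ker \<and> s \<in> ker \<and> s \<noteq> 0}"
    and root: "poly p (to_fract r * to_fract d / to_fract c) = 0"
  shows "p = 0"
proof -
  let ?q = "pcompose p [:0, to_fract d / to_fract c:]"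
  have "coeff ?q j \<in> {Fraction_Field.Fract a s | a s. a \<in> ker \<and> s \<in> ker \<and> s \<noteq> 0}" for j
  proof -
    obtain a s where "coeff p j = Fraction_Field.Fract a s" "a \<in> ker" "s \<in> ker" "s \<noteq> 0"
      using p[of j] by blast
    then have "coeff ?q j = Fraction_Field.Fract (d ^ j * a) (c ^ j * s)"
      "d ^ j * a \<in> ker" "c ^ j * s \<in> ker" "c ^ j * s \<noteq> 0"
      using assms(2-5)
      by (simp_all add: coeff_pcompose_linear Fract_conv_to_fract to_fract_power power_divide
          ker_mult ker_power)
    then show ?thesis
      by blast
  qed
  moreover have "poly ?q (to_fract r) = 0"
    using root by (simp add: poly_pcompose mult.commute)
  ultimately have "?q = 0"
    using fract_poly_transcendental[OF ker_subring slice_transcendental[OF \<open>D r \<noteq> 0\<close>]] by blast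
  then show ?thesis
    using assms(4,5) by (simp add: pcompose_eq_0_iff)
qed

lemma funpow_D_slice_reduction:
  assumes "D (D r) = 0" "(D ^^ Suc m) b = 0"
  shows "(D ^^ m) (of_nat (fact m) * D r ^ m * b - (D ^^ m) b * r ^ m) = 0"
proof -
  have "D (of_nat (fact m) * D r ^ m) = 0" "D ((D ^^ m) b) = 0"
    using assms by (simp_all add: ker_mult ker_power)
  then show ?thesis
    using assms(1) by (simp add: funpow_D_diff funpow_D_ker_mult funpow_D_power_slice)
qed

end

section \<open>Homogeneous locally nilpotent derivations\<close>

locale graded_lnd = graded Bg + lnd D
  for Bg :: "'g::ab_group_add \<Rightarrow> 'b::{idom,ring_char_0} set" and D :: "'b \<Rightarrow> 'b" +
  assumes homogeneous: "homogeneous_map Bg D"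
begin

definition deg_D :: 'g where
  "deg_D = (SOME h. \<forall>g. \<forall>x\<in>Bg g. D x \<in> Bg (g + h))"

lemma D_in_Bg: "x \<in> Bg g \<Longrightarrow> D x \<in> Bg (g + deg_D)"
  using someI_ex[OF homogeneous[unfolded homogeneous_map_def]] unfolding deg_D_def by blast

lemma funpow_D_in_Bg: "x \<in> Bg g \<Longrightarrow> (D ^^ n) x \<in> Bg (g + nsmul n deg_D)"
proof (induction n)
  case (Suc n)
  then have "D ((D ^^ n) x) \<in> Bg (g + nsmul n deg_D + deg_D)"
    by (intro D_in_Bg)
  then show ?case
    by (simp add: algebra_simps)
qed simp

lemma exists_homogeneous_local_slice:
  assumes "D \<noteq> (\<lambda>_. 0)"
  shows "\<exists>r \<rho>. r \<in> Bg \<rho> \<and> D r \<noteq> 0 \<and> D (D r) = 0"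
proof -
  obtain b where "D b \<noteq> 0"
    using assms by blast
  moreover have "D b = (\<Sum>g\<in>hsupp b. D (hcomp b g))"
    using D_sum[of "hcomp b" "hsupp b"] sum_hcomp[of "hsupp b" b] by simp
  ultimately obtain g where "D (hcomp b g) \<noteq> 0"
    by (metis (no_types, lifting) sum.neutral)
  moreover from this have "hcomp b g \<noteq> 0"
    by auto
  ultimately obtain m where m: "(D ^^ m) (hcomp b g) \<noteq> 0" "(D ^^ Suc m) (hcomp b g) = 0"
    using exists_last_nonzero_iterate by blast
  have "m \<noteq> 0"
    using m(2) \<open>D (hcomp b g) \<noteq> 0\<close> by (cases m) auto
  then obtain k where "m = Suc k"
    using not0_implies_Suc by blast
  then have "(D ^^ k) (hcomp b g) \<in> Bg (g + nsmul k deg_D)"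
    "D ((D ^^ k) (hcomp b g)) \<noteq> 0" "D (D ((D ^^ k) (hcomp b g))) = 0"
    using m by (simp_all add: funpow_D_in_Bg)
  then show ?thesis
    by blast
qed

lemma slice_reduction_in_Bg:
  assumes "r \<in> Bg \<rho>" "b \<in> Bg i"
  shows "of_nat (fact m) * D r ^ m * b - (D ^^ m) b * r ^ m \<in> Bg (i + nsmul m (\<rho> + deg_D))"
proof -
  have "of_nat (fact m) * D r ^ m * b \<in> Bg (0 + nsmul m (\<rho> + deg_D) + i)"
    using assms by (intro Bg_mult Bg_of_nat Bg_power D_in_Bg)
  moreover have "(D ^^ m) b * r ^ m \<in> Bg (i + nsmul m deg_D + nsmul m \<rho>)"
    using assms by (intro Bg_mult Bg_power funpow_D_in_Bg)
  ultimately show ?thesis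
    by (intro Bg_diff) (simp_all add: nsmul_add_right algebra_simps)
qed

text \<open>Induction on the nilpotency index of \<open>b\<close>: with \<open>c = D\<^sup>m b \<in> ker D\<close>, the element
  \<open>m! (D r)\<^sup>m b - c r\<^sup>m\<close> is killed by \<open>D\<^sup>m\<close>.\<close>

lemma homogeneous_slice_expansion:
  assumes r: "r \<in> Bg \<rho>" "D r \<noteq> 0" "D (D r) = 0" and b: "b \<in> Bg i"
  shows "\<exists>e \<epsilon> P. e \<in> ker \<inter> Bg \<epsilon> \<and> e \<noteq> 0 \<and>
    (\<forall>j. coeff P j \<in> ker \<inter> Bg (\<epsilon> + i - nsmul j \<rho>)) \<and> e * b = poly P r"
    (is "?expansion b i")
proof -
  have "?expansion b i" if "(D ^^ n) b = 0" "b \<in> Bg i" for n b i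
    using that
  proof (induction n arbitrary: b i)
    case 0
    then show ?case
      by (intro exI[of _ 1] exI[of _ 0] exI[of _ 0]) simp
  next
    case (Suc m)
    define c where "c = (D ^^ m) b"
    define b' where "b' = of_nat (fact m) * D r ^ m * b - c * r ^ m"
    have "D c = 0"
      using Suc.prems(1) by (simp add: c_def)
    have c_in: "c \<in> Bg (i + nsmul m deg_D)"
      unfolding c_def using Suc.prems(2) by (rule funpow_D_in_Bg)
    have a_pow_in: "D r ^ m \<in> Bg (nsmul m (\<rho> + deg_D))"
      using r(1) by (intro Bg_power D_in_Bg)
    have "b' \<in> Bg (i + nsmul m (\<rho> + deg_D))"
      unfolding b'_def c_def using r(1) Suc.prems(2) by (rule slice_reduction_in_Bg)
    moreover have "(D ^^ m) b' = 0"
      unfolding b'_def c_def using r(3) Suc.prems(1) by (rule funpow_D_slice_reduction)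
    ultimately obtain e' \<epsilon>' P' where IH: "e' \<in> ker \<inter> Bg \<epsilon>'" "e' \<noteq> 0"
      "\<And>j. coeff P' j \<in> ker \<inter> Bg (\<epsilon>' + (i + nsmul m (\<rho> + deg_D)) - nsmul j \<rho>)" "e' * b' = poly P' r"
      using Suc.IH by blast
    define \<epsilon> where "\<epsilon> = \<epsilon>' + nsmul m (\<rho> + deg_D)"
    define e where "e = e' * (of_nat (fact m) * D r ^ m)"
    define P where "P = P' + monom (e' * c) m"
    have "e \<in> ker \<inter> Bg \<epsilon>" "e \<noteq> 0"
      using IH(1,2) r(2,3) Bg_mult[OF _ Bg_mult[OF Bg_of_nat a_pow_in], of e' \<epsilon>' "fact m"]
      by (simp_all add: e_def \<epsilon>_def ker_mult ker_power)
    moreover have "coeff P j \<in> ker \<inter> Bg (\<epsilon> + i - nsmul j \<rho>)" for j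
    proof -
      have "e' * c \<in> ker \<inter> Bg (\<epsilon> + i - nsmul m \<rho>)"
        using IH(1) \<open>D c = 0\<close> Bg_mult[OF _ c_in, of e' \<epsilon>']
        by (simp add: ker_mult \<epsilon>_def nsmul_add_right algebra_simps)
      moreover have "coeff P' j \<in> ker \<inter> Bg (\<epsilon> + i - nsmul j \<rho>)"
        using IH(3)[of j] by (simp add: \<epsilon>_def algebra_simps)
      ultimately show ?thesis
        by (auto simp: P_def coeff_monom D_add Bg_add)
    qed
    moreover have "e * b = poly P r"
      using IH(4) by (simp add: e_def P_def b'_def poly_monom algebra_simps)
    ultimately show ?case
      by blast
  qed
  then show ?thesis
    using nilpotent b unfolding locally_nilpotent_def by blast
qed

lemma to_fract_subfield_in_HFrac_ker:
  assumes "is_subfield k"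
  shows "to_fract ` (k \<inter> Bg 0) \<subseteq> HFrac Bg ker"
proof
  fix u
  assume "u \<in> to_fract ` (k \<inter> Bg 0)"
  then obtain x where "u = to_fract x" "x \<in> k \<inter> Bg 0"
    by blast
  moreover from this have "x \<in> ker \<inter> Bg 0"
    using subfield_subset_ker[OF assms] by blast
  ultimately show "u \<in> HFrac Bg ker"
    by (simp add: to_fract_in_HFrac)
qed

text \<open>Substituting \<open>r = t c / d\<close> into the expansions \<open>e b = P(r)\<close> of numerator and denominator gives
  polynomials in \<open>t\<close> whose coefficients are fractions of one common degree; dividing by a
  leading coefficient brings them into \<open>HFrac(A)\<close>.\<close>

lemma HFrac_subset_rational_functions:
  assumes r: "r \<in> Bg \<rho>" "D r \<noteq> 0" "D (D r) = 0"
    and c: "c \<in> ker \<inter> Bg \<gamma>" "c \<noteq> 0" and d: "d \<in> ker \<inter> Bg \<delta>" "d \<noteq> 0" and \<rho>: "\<rho> = \<gamma> - \<delta>"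
    and u: "u \<in> HFrac Bg UNIV"
  defines "t \<equiv> Fraction_Field.Fract (r * d) c"
  shows "\<exists>p q. poly_over (HFrac Bg ker) p \<and> poly_over (HFrac Bg ker) q \<and> poly q t \<noteq> 0 \<and>
    u = poly p t / poly q t"
proof -
  obtain b s i where u_eq: "u = Fraction_Field.Fract b s" "b \<in> Bg i" "s \<in> Bg i" "s \<noteq> 0"
    using u by (auto elim: HFrac_memE)
  obtain e1 \<epsilon>1 P where P: "e1 \<in> ker \<inter> Bg \<epsilon>1" "e1 \<noteq> 0"
    "\<And>j. coeff P j \<in> ker \<inter> Bg (\<epsilon>1 + i - nsmul j \<rho>)" "e1 * b = poly P r"
    using homogeneous_slice_expansion[OF r u_eq(2)] by blast
  obtain e2 \<epsilon>2 Q where Q: "e2 \<in> ker \<inter> Bg \<epsilon>2" "e2 \<noteq> 0"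
    "\<And>j. coeff Q j \<in> ker \<inter> Bg (\<epsilon>2 + i - nsmul j \<rho>)" "e2 * s = poly Q r"
    using homogeneous_slice_expansion[OF r u_eq(3)] by blast
  define rescale where "rescale W = pcompose (fract_poly W) [:0, to_fract c / to_fract d:]" for W
  have poly_rescale: "poly (rescale W) t = to_fract (poly W r)" for W
    unfolding rescale_def t_def Fract_conv_to_fract to_fract_mult using c(2) d(2)
    by (rule poly_fract_poly_rescale)
  have rescale_deg: "coeff (rescale W) j \<in> HFrac_deg Bg ker (\<epsilon> + i)"
    if "\<And>j. coeff W j \<in> ker \<inter> Bg (\<epsilon> + i - nsmul j \<rho>)" for W \<epsilon> j
    unfolding rescale_def using ker_subring that[unfolded \<rho>] c(1) d
    by (rule coeff_rescale_in_HFrac_deg)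
  have e_deg: "to_fract e \<in> HFrac_deg Bg ker \<epsilon>" if "e \<in> ker \<inter> Bg \<epsilon>" for e \<epsilon>
    using Fract_in_HFrac_deg[where x = e and y = 1 and i = \<epsilon> and j = 0 and S = ker and Bg = Bg] that
    by (simp add: to_fract_def)
  define U where "U = smult (to_fract e2) (rescale P)"
  define V where "V = smult (to_fract e1) (rescale Q)"
  have ker_closed: "x * y \<in> ker" if "x \<in> ker" "y \<in> ker" for x y
    using that by (simp add: ker_mult)
  have "coeff U j \<in> HFrac_deg Bg ker (\<epsilon>2 + (\<epsilon>1 + i))" "coeff V j \<in> HFrac_deg Bg ker (\<epsilon>2 + (\<epsilon>1 + i))"
    for j
    using HFrac_deg_mult[OF ker_closed e_deg[OF Q(1)] rescale_deg[OF P(3)]]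
      HFrac_deg_mult[OF ker_closed e_deg[OF P(1)] rescale_deg[OF Q(3)]]
    by (simp_all add: U_def V_def add.left_commute)
  moreover have "poly V t \<noteq> 0" "u = poly U t / poly V t"
    using u_eq(1,4) P(2) Q(2)
    by (simp_all add: U_def V_def poly_rescale Fract_conv_to_fract flip: P(4) Q(4))
  ultimately show ?thesis
    using rational_function_normalize[OF ker_closed] by metis
qed

lemma HFrac_eq_rational_functions:
  assumes r: "r \<in> Bg \<rho>" "D r \<noteq> 0" "D (D r) = 0"
    and c: "c \<in> ker \<inter> Bg \<gamma>" "c \<noteq> 0" and d: "d \<in> ker \<inter> Bg \<delta>" "d \<noteq> 0" and \<rho>: "\<rho> = \<gamma> - \<delta>"
  defines "t \<equiv> Fraction_Field.Fract (r * d) c"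
  shows "HFrac Bg UNIV = {poly p t / poly q t | p q.
    poly_over (HFrac Bg ker) p \<and> poly_over (HFrac Bg ker) q \<and> poly q t \<noteq> 0}"
proof (intro equalityI subsetI)
  fix u
  assume "u \<in> HFrac Bg UNIV"
  then show "u \<in> {poly p t / poly q t | p q.
      poly_over (HFrac Bg ker) p \<and> poly_over (HFrac Bg ker) q \<and> poly q t \<noteq> 0}"
    using HFrac_subset_rational_functions[OF r c d \<rho>] unfolding t_def by blast
next
  fix u
  assume "u \<in> {poly p t / poly q t | p q.
      poly_over (HFrac Bg ker) p \<and> poly_over (HFrac Bg ker) q \<and> poly q t \<noteq> 0}"
  then obtain p q where "u = poly p t / poly q t"
    "poly_over (HFrac Bg UNIV) p" "poly_over (HFrac Bg UNIV) q"
    using HFrac_mono[of ker UNIV Bg] unfolding poly_over_def by blast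
  moreover have "is_subfield (HFrac Bg UNIV)"
    by (rule HFrac_subfield) (simp add: is_subring_def)
  moreover have "t \<in> HFrac Bg UNIV"
    unfolding t_def using r(1) c d \<rho> by (intro slice_quotient_in_HFrac) auto
  ultimately show "u \<in> HFrac Bg UNIV"
    by (simp add: poly_in_subfield subfield_divide)
qed

lemma HFrac_purely_transcendental_slice:
  assumes r: "r \<in> Bg \<rho>" "D r \<noteq> 0" "D (D r) = 0"
    and c: "c \<in> ker \<inter> Bg \<gamma>" "c \<noteq> 0" and d: "d \<in> ker \<inter> Bg \<delta>" "d \<noteq> 0" and \<rho>: "\<rho> = \<gamma> - \<delta>"
  shows "purely_transcendental_deg1 (HFrac Bg ker) (HFrac Bg UNIV)"
proof -
  define t where "t = Fraction_Field.Fract (r * d) c"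
  have "HFrac Bg ker \<subseteq> HFrac Bg UNIV"
    by (rule HFrac_mono) simp
  moreover have "t \<in> HFrac Bg UNIV"
    unfolding t_def using r(1) c d \<rho> by (intro slice_quotient_in_HFrac) auto
  moreover have "p = 0" if p: "poly_over (HFrac Bg ker) p" "poly p t = 0" for p
  proof (rule slice_fract_transcendental[OF r(2) _ _ c(2) d(2)])
    show "c \<in> ker" "d \<in> ker"
      using c(1) d(1) by simp_all
    show "coeff p j \<in> {Fraction_Field.Fract a s | a s. a \<in> ker \<and> s \<in> ker \<and> s \<noteq> 0}" for j
      using p(1) HFrac_subset_fractions[of Bg ker] unfolding poly_over_def by blast
    show "poly p (to_fract r * to_fract d / to_fract c) = 0"
      using p(2) by (simp add: t_def Fract_conv_to_fract)
  qed
  moreover have "HFrac Bg UNIV = {poly p t / poly q t | p q.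
      poly_over (HFrac Bg ker) p \<and> poly_over (HFrac Bg ker) q \<and> poly q t \<noteq> 0}"
    unfolding t_def by (rule HFrac_eq_rational_functions[OF r c d \<rho>])
  ultimately show ?thesis
    unfolding purely_transcendental_deg1_def by blast
qed

lemma HFrac_purely_transcendental:
  assumes "D \<noteq> (\<lambda>_. 0)" and G_eq: "Gsupp Bg ker = Gsupp Bg UNIV"
  shows "purely_transcendental_deg1 (HFrac Bg ker) (HFrac Bg UNIV)"
proof -
  obtain r \<rho> where r: "r \<in> Bg \<rho>" "D r \<noteq> 0" "D (D r) = 0"
    using exists_homogeneous_local_slice[OF assms(1)] by blast
  then have "r \<noteq> 0"
    by auto
  then have "\<rho> \<in> {g. \<exists>x\<in>UNIV \<inter> Bg g. x \<noteq> 0}"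
    using r(1) by blast
  then have "\<rho> \<in> Gsupp Bg UNIV"
    unfolding Gsupp_def by (rule subsetD[OF subset_gen_subgroup])
  then obtain \<gamma> \<delta> where "\<rho> = \<gamma> - \<delta>" "\<exists>c\<in>ker \<inter> Bg \<gamma>. c \<noteq> 0" "\<exists>d\<in>ker \<inter> Bg \<delta>. d \<noteq> 0"
    unfolding G_eq [symmetric] Gsupp_subring[OF ker_subring] by blast
  moreover from this obtain c d where "c \<in> ker \<inter> Bg \<gamma>" "c \<noteq> 0" "d \<in> ker \<inter> Bg \<delta>" "d \<noteq> 0"
    by blast
  ultimately show ?thesis
    using HFrac_purely_transcendental_slice[OF r] by blast
qed

end

theorem theorem3p6:
  fixes Bg :: "'g::ab_group_add \<Rightarrow> 'b::{idom, ring_char_0} set"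
    and D :: "'b \<Rightarrow> 'b"
  assumes grading: "is_grading Bg"
    and D_hlnd: "D \<in> HLND Bg"
    and D_nonzero: "D \<noteq> (\<lambda>_. 0)"
    and G_eq: "Gsupp Bg {b. D b = 0} = Gsupp Bg UNIV"
  shows "purely_transcendental_deg1 (HFrac Bg {b. D b = 0}) (HFrac Bg UNIV)
    \<and> (\<forall>k :: 'b set. is_subfield k \<longrightarrow>
           is_subfield (k \<inter> Bg 0) \<and>
           (\<lambda>x. Fraction_Field.Fract x 1) ` (k \<inter> Bg 0) \<subseteq> HFrac Bg {b. D b = 0})
    \<and> (torsion_free_group TYPE('g) \<longrightarrow> (\<forall>k :: 'b set. is_subfield k \<longrightarrow>
           (\<lambda>x. Fraction_Field.Fract x 1) ` k \<subseteq> HFrac Bg {b. D b = 0} \<and>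
           ruled ((\<lambda>x. Fraction_Field.Fract x 1) ` k) (HFrac Bg UNIV)))"
proof -
  interpret graded_lnd Bg D
    using grading D_hlnd by unfold_locales (simp_all add: HLND_def)
  have to_fract_eq: "(\<lambda>x. Fraction_Field.Fract x 1) = to_fract"
    by (simp add: fun_eq_iff to_fract_def)
  have a: "purely_transcendental_deg1 (HFrac Bg ker) (HFrac Bg UNIV)"
    using D_nonzero G_eq by (rule HFrac_purely_transcendental)
  have b: "is_subfield (k \<inter> Bg 0) \<and> to_fract ` (k \<inter> Bg 0) \<subseteq> HFrac Bg ker"
    if "is_subfield k" for k
    using subfield_Int_Bg0 to_fract_subfield_in_HFrac_ker that by blast
  have c: "to_fract ` k \<subseteq> HFrac Bg ker \<and> ruled (to_fract ` k) (HFrac Bg UNIV)"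
    if "torsion_free_group TYPE('g)" "is_subfield k" for k
  proof -
    have "to_fract ` k \<subseteq> HFrac Bg ker"
      using b[OF that(2)] subfield_subset_Bg0[OF that] by (simp add: Int_absorb2)
    then show ?thesis
      unfolding ruled_def using HFrac_subfield[OF ker_subring] HFrac_mono[of ker UNIV] a
      by (auto simp: purely_transcendental_deg1_def)
  qed
  show ?thesis
    unfolding to_fract_eq using a b c by blast
qed

end
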